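(* Let $\phi>0$, $\eta\in[0,1)$, let $\{U_t\}_{t\ge1}$ be i.i.d. uniform on $[0,1]$, $\{R_t\}_{t\ge1}$ i.i.d. nonnegative with distribution $F_R$, independent of $\{U_t\}$, and let $X_0\ge0$ be independent of both sequences with $\mathbb P(X_0>x)$ regularly varying at infinity with index $-\alpha$, $\alpha>0$. Define $$X_{t+1}=R_{t+1}\big(X_t^\phi\,\mathbf 1\{\eta\le U_{t+1}\}+\mathbf 1\{\eta>U_{t+1}\}\big),\quad t\ge0.$$ Then for every $h\ge1$, conditionally on $X_0>x$, $(x^{-1}X_0,x^{-\phi}X_1,\dots,x^{-\phi^h}X_h)$ converges in distribution as $x\to\infty$ to $(Y_0,\dots,Y_h)$, where $Y_j=Y_{j-1}^\phi W_j$, $W_1,\dots,W_h$ are i.i.d. with distribution $G=(1-\eta)F_R+\eta\delta_0$ ($\delta_0$ the Dirac mass at $0$), independent of $Y_0$, and $\mathbb P(Y_0>y)=y^{-\alpha}$ for $y\ge1$. *)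

theory Defs
  imports "HOL-Probability.Probability"
begin

definition regularly_varying :: "real \<Rightarrow> (real \<Rightarrow> real) \<Rightarrow> bool" where
  "regularly_varying \<rho> f \<longleftrightarrow>
     eventually (\<lambda>x. f x > 0) at_top \<and>
     (\<forall>c>0. ((\<lambda>x. f (c * x) / f x) \<longlongrightarrow> c powr \<rho>) at_top)"

end

theory Submission
  imports Defs
begin

text \<open>
  Dividing \<open>X j\<close> by \<open>x powr (\<phi> ^ j)\<close> turns the chain into a deterministic function of the
  scale \<open>1/x\<close>, the normalised start \<open>X 0 / x\<close> and the inputs \<open>U t, R t\<close>: the scaled path. It
  is jointly continuous in scale and start, and at scale \<open>0\<close> it is the limiting recursion
  \<open>Y j = Y (j-1) powr \<phi> \<cdot> W j\<close> driven by the thinned multipliers \<open>R t \<cdot> 1{\<eta> \<le> U t}\<close>, which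
  have the law \<open>G\<close> of the \<open>W j\<close>. Since \<open>X 0\<close> is independent of the inputs, the conditional
  expectation of a bounded continuous \<open>g\<close> of the normalised vector equals the integral of the
  path kernel (the mean of \<open>g\<close> over the inputs, scale and start frozen) against the law of
  \<open>X 0 / x\<close> given \<open>X 0 > x\<close>. By regular variation that law converges weakly to the Pareto law
  of \<open>Y 0\<close>, and the path kernel is bounded and jointly continuous, so a parametric continuous
  mapping theorem (via Skorohod's representation) gives the limit.
\<close>

lemma integral_uniform_measure:
  fixes f :: "'a \<Rightarrow> real"
  assumes M: "finite_measure M" and S[measurable]: "S \<in> sets M" and S0: "measure M S \<noteq> 0"
    and f[measurable]: "f \<in> borel_measurable M"
  shows "integral\<^sup>L (uniform_measure M S) f = (\<integral>x. indicator S x * f x \<partial>M) / measure M S"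
proof -
  interpret finite_measure M by fact
  have pos: "measure M S > 0"
    using S0 by (simp add: order.not_eq_order_implies_strict)
  have dens: "(\<lambda>x. indicator S x / emeasure M S) = (\<lambda>x. ennreal (indicator S x / measure M S))"
    using pos divide_ennreal[of 1 "measure M S", simplified]
    by (auto simp: fun_eq_iff indicator_def emeasure_eq_measure)
  have "integral\<^sup>L (uniform_measure M S) f = (\<integral>x. (indicator S x / measure M S) *\<^sub>R f x \<partial>M)"
    unfolding uniform_measure_def dens by (rule integral_density) (auto simp: pos)
  also have "\<dots> = (\<integral>x. (indicator S x * f x) / measure M S \<partial>M)"
    by (intro Bochner_Integration.integral_cong refl) simp
  also have "\<dots> = (\<integral>x. indicator S x * f x \<partial>M) / measure M S"
    by (rule integral_divide_zero)
  finally show ?thesis .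
qed

lemma integral_indep_var_iterated:
  fixes F :: "'b \<times> 'b \<Rightarrow> real"
  assumes M: "prob_space M" and ind: "prob_space.indep_var M MA A MB B"
    and F[measurable]: "F \<in> borel_measurable (MA \<Otimes>\<^sub>M MB)" and bnd: "\<And>p. \<bar>F p\<bar> \<le> C"
  shows "(\<integral>\<omega>. F (A \<omega>, B \<omega>) \<partial>M) = (\<integral>\<omega>. (\<integral>\<omega>'. F (A \<omega>, B \<omega>') \<partial>M) \<partial>M)"
proof -
  interpret prob_space M by fact
  have [measurable]: "random_variable MA A" "random_variable MB B"
    and eq: "distr M MA A \<Otimes>\<^sub>M distr M MB B = distr M (MA \<Otimes>\<^sub>M MB) (\<lambda>x. (A x, B x))"
    using ind by (simp_all add: indep_var_distribution_eq)
  interpret PA: prob_space "distr M MA A" by (rule prob_space_distr) simp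
  interpret PB: prob_space "distr M MB B" by (rule prob_space_distr) simp
  interpret P2: pair_prob_space "distr M MA A" "distr M MB B" ..
  have intF: "integrable (distr M MA A \<Otimes>\<^sub>M distr M MB B) F"
    by (rule P2.integrable_const_bound[where B=C]) (use bnd in auto)
  have "(\<integral>\<omega>. F (A \<omega>, B \<omega>) \<partial>M) = integral\<^sup>L (distr M MA A \<Otimes>\<^sub>M distr M MB B) F"
    by (simp add: eq integral_distr)
  also have "\<dots> = (\<integral>a. (\<integral>b. F (a, b) \<partial>distr M MB B) \<partial>distr M MA A)"
    by (rule P2.integral_fst'[symmetric, OF intF])
  also have "\<dots> = (\<integral>a. (\<integral>\<omega>'. F (a, B \<omega>') \<partial>M) \<partial>distr M MA A)"
    by (intro Bochner_Integration.integral_cong refl integral_distr) auto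
  also have "\<dots> = (\<integral>\<omega>. (\<integral>\<omega>'. F (A \<omega>, B \<omega>') \<partial>M) \<partial>M)"
    by (subst integral_distr) auto
  finally show ?thesis .
qed

text \<open>Two independent families with the same marginals have the same joint law, so every
  measurable functional of them has the same expectation.\<close>

lemma integral_indep_family_eq:
  fixes A :: "'i \<Rightarrow> 'a \<Rightarrow> real" and B :: "'i \<Rightarrow> 'b \<Rightarrow> real"
    and F :: "('i \<Rightarrow> real) \<Rightarrow> real"
  assumes M: "prob_space M" and N: "prob_space N" and I: "I \<noteq> {}"
    and indA: "prob_space.indep_vars M (\<lambda>_. borel) A I"
    and indB: "prob_space.indep_vars N (\<lambda>_. borel) B I"
    and marg: "\<And>i. i \<in> I \<Longrightarrow> distr M borel (A i) = distr N borel (B i)"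
    and F[measurable]: "F \<in> borel_measurable (PiM I (\<lambda>_. borel))"
  shows "(\<integral>\<omega>. F (\<lambda>i\<in>I. A i \<omega>) \<partial>M) = (\<integral>\<omega>. F (\<lambda>i\<in>I. B i \<omega>) \<partial>N)"
proof -
  interpret PM: prob_space M by fact
  interpret PN: prob_space N by fact
  have rvA: "A i \<in> borel_measurable M" and rvB: "B i \<in> borel_measurable N" if "i \<in> I" for i
    using indA indB that unfolding PM.indep_vars_def PN.indep_vars_def by auto
  note [measurable] = rvA rvB
  have "distr M (PiM I (\<lambda>_. borel)) (\<lambda>\<omega>. \<lambda>i\<in>I. A i \<omega>) = PiM I (\<lambda>i. distr M borel (A i))"
    using PM.indep_vars_iff_distr_eq_PiM'[OF I rvA] indA by simp
  also have "\<dots> = PiM I (\<lambda>i. distr N borel (B i))"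
    by (rule PiM_cong[OF refl marg])
  also have "\<dots> = distr N (PiM I (\<lambda>_. borel)) (\<lambda>\<omega>. \<lambda>i\<in>I. B i \<omega>)"
    using PN.indep_vars_iff_distr_eq_PiM'[OF I rvB] indB by simp
  finally have distr_eq: "distr M (PiM I (\<lambda>_. borel)) (\<lambda>\<omega>. \<lambda>i\<in>I. A i \<omega>) =
      distr N (PiM I (\<lambda>_. borel)) (\<lambda>\<omega>. \<lambda>i\<in>I. B i \<omega>)" .
  have "(\<integral>\<omega>. F (\<lambda>i\<in>I. A i \<omega>) \<partial>M) = integral\<^sup>L (distr M (PiM I (\<lambda>_. borel)) (\<lambda>\<omega>. \<lambda>i\<in>I. A i \<omega>)) F"
    by (subst integral_distr) (auto intro!: measurable_restrict)
  also have "\<dots> = (\<integral>\<omega>. F (\<lambda>i\<in>I. B i \<omega>) \<partial>N)"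
    unfolding distr_eq by (subst integral_distr) (auto intro!: measurable_restrict)
  finally show ?thesis .
qed

lemma measure_thinned_variable:
  fixes U R :: "'a \<Rightarrow> real"
  assumes M: "prob_space M" and ind: "prob_space.indep_var M borel U borel R"
    and U_unif: "distr M borel U = uniform_measure lborel {0..1}" and eta: "0 \<le> \<eta>" "\<eta> \<le> 1"
    and A[measurable]: "A \<in> sets borel"
  shows "measure M ((\<lambda>\<omega>. R \<omega> * (if \<eta> \<le> U \<omega> then 1 else 0)) -` A \<inter> space M) =
      (1 - \<eta>) * measure (distr M borel R) A + \<eta> * indicator A 0"
proof -
  interpret prob_space M by fact
  have [measurable]: "U \<in> borel_measurable M" "R \<in> borel_measurable M"
    using ind by (simp_all add: indep_var_distribution_eq)
  define E1 where "E1 = {\<omega> \<in> space M. \<eta> \<le> U \<omega>}"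
  define E2 where "E2 = R -` A \<inter> space M"
  have [measurable]: "E1 \<in> sets M" "E2 \<in> sets M" unfolding E1_def E2_def by measurable
  have prob_E1: "prob E1 = 1 - \<eta>"
  proof -
    have "prob E1 = measure (uniform_measure lborel {0..1}) {\<eta>..}"
      unfolding U_unif[symmetric] E1_def by (simp add: measure_distr vimage_def Int_def conj_commute)
    also have "\<dots> = measure lborel ({0..1} \<inter> {\<eta>..}) / measure lborel {0..1::real}"
      by (rule measure_uniform_measure) auto
    also have "{0..1} \<inter> {\<eta>..} = {\<eta>..1::real}" using eta by auto
    finally show ?thesis using eta by (simp add: measure_def)
  qed
  have prob_E1_E2: "prob (E1 \<inter> E2) = prob E1 * prob E2"
  proof -
    have "E1 \<inter> E2 = {\<omega> \<in> space M. U \<omega> \<in> {\<eta>..} \<and> R \<omega> \<in> A}"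
      and "E1 = {\<omega> \<in> space M. U \<omega> \<in> {\<eta>..}}" and "E2 = {\<omega> \<in> space M. R \<omega> \<in> A}"
      unfolding E1_def E2_def by auto
    then show ?thesis using prob_indep_random_variable[OF ind, of "{\<eta>..}" A] by simp
  qed
  have split: "(\<lambda>\<omega>. R \<omega> * (if \<eta> \<le> U \<omega> then 1 else 0)) -` A \<inter> space M =
      (E1 \<inter> E2) \<union> ((space M - E1) \<inter> (if 0 \<in> A then space M else {}))"
    unfolding E1_def E2_def by (auto split: if_splits)
  have "measure M ((\<lambda>\<omega>. R \<omega> * (if \<eta> \<le> U \<omega> then 1 else 0)) -` A \<inter> space M) =
      prob (E1 \<inter> E2) + prob ((space M - E1) \<inter> (if 0 \<in> A then space M else {}))"
    unfolding split by (rule finite_measure_Union) auto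
  also have "\<dots> = (1 - \<eta>) * measure (distr M borel R) A + \<eta> * indicator A 0"
    using prob_E1_E2 prob_E1 prob_compl[of E1]
    by (cases "0 \<in> A") (auto simp: Int_absorb2 measure_distr E2_def)
  finally show ?thesis .
qed

lemma continuous_on_parametric_integral:
  fixes G :: "'p::{first_countable_topology, t2_space} \<Rightarrow> 'a \<Rightarrow> real"
  assumes M: "finite_measure M"
    and G_meas: "\<And>p. G p \<in> borel_measurable M"
    and G_cont: "\<And>\<omega>. \<omega> \<in> space M \<Longrightarrow> continuous_on UNIV (\<lambda>p. G p \<omega>)"
    and G_bound: "\<And>p \<omega>. \<bar>G p \<omega>\<bar> \<le> C"
  shows "continuous_on UNIV (\<lambda>p. \<integral>\<omega>. G p \<omega> \<partial>M)"
proof (rule continuous_on_sequentiallyI)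
  fix u :: "nat \<Rightarrow> 'p" and a assume u: "u \<longlonglongrightarrow> a"
  interpret finite_measure M by fact
  show "(\<lambda>n. \<integral>\<omega>. G (u n) \<omega> \<partial>M) \<longlonglongrightarrow> (\<integral>\<omega>. G a \<omega> \<partial>M)"
  proof (rule integral_dominated_convergence[where w="\<lambda>_. C"])
    show "AE \<omega> in M. (\<lambda>n. G (u n) \<omega>) \<longlonglongrightarrow> G a \<omega>"
    proof (rule AE_I2)
      fix \<omega> assume "\<omega> \<in> space M"
      show "(\<lambda>n. G (u n) \<omega>) \<longlonglongrightarrow> G a \<omega>"
        by (rule continuous_on_tendsto_compose[OF G_cont[OF \<open>\<omega> \<in> space M\<close>] u]) simp_all
    qed
  qed (use G_meas G_bound in auto)
qed

text \<open>Proved via Skorohod's representation and dominated convergence.\<close>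

lemma weak_conv_parametric_integral:
  fixes H :: "real \<Rightarrow> real \<Rightarrow> real" and \<mu> :: "nat \<Rightarrow> real measure"
  assumes \<mu>: "\<And>n. real_distribution (\<mu> n)" and P: "real_distribution P"
    and conv: "weak_conv_m \<mu> P"
    and H_cont: "continuous_on UNIV (\<lambda>p. H (fst p) (snd p))" and H_bound: "\<And>e w. \<bar>H e w\<bar> \<le> C"
    and e: "e \<longlonglongrightarrow> e0"
  shows "(\<lambda>n. \<integral>w. H (e n) w \<partial>\<mu> n) \<longlonglongrightarrow> (\<integral>w. H e0 w \<partial>P)"
proof -
  obtain \<Omega> :: "real measure" and Z Z0 where \<Omega>: "prob_space \<Omega>"
    and Z_meas: "\<And>n. Z n \<in> borel_measurable \<Omega>" and Z_distr: "\<And>n. distr \<Omega> borel (Z n) = \<mu> n"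
    and Z0_meas: "Z0 \<in> measurable \<Omega> lborel" and Z0_distr: "distr \<Omega> borel Z0 = P"
    and Z_lim: "\<And>\<omega>. \<omega> \<in> space \<Omega> \<Longrightarrow> (\<lambda>n. Z n \<omega>) \<longlonglongrightarrow> Z0 \<omega>"
    using Skorohod[OF \<mu> P conv] by blast
  interpret prob_space \<Omega> by (rule \<Omega>)
  have H_meas: "(\<lambda>\<omega>. H (f1 \<omega>) (f2 \<omega>)) \<in> borel_measurable M'"
    if "f1 \<in> borel_measurable M'" "f2 \<in> borel_measurable M'" for f1 f2 and M' :: "'c measure"
    by (rule borel_measurable_continuous_Pair[OF that H_cont])
  have [measurable]: "Z0 \<in> borel_measurable \<Omega>" using Z0_meas by simp
  have "(\<lambda>n. \<integral>\<omega>. H (e n) (Z n \<omega>) \<partial>\<Omega>) \<longlonglongrightarrow> (\<integral>\<omega>. H e0 (Z0 \<omega>) \<partial>\<Omega>)"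
  proof (rule integral_dominated_convergence[where w="\<lambda>_. C"])
    show "AE \<omega> in \<Omega>. (\<lambda>n. H (e n) (Z n \<omega>)) \<longlonglongrightarrow> H e0 (Z0 \<omega>)"
      using continuous_on_tendsto_compose[OF H_cont tendsto_Pair[OF e Z_lim]] by auto
  qed (auto intro!: H_meas Z_meas simp: H_bound)
  moreover have "(\<integral>w. H (e n) w \<partial>\<mu> n) = (\<integral>\<omega>. H (e n) (Z n \<omega>) \<partial>\<Omega>)" for n
    unfolding Z_distr[symmetric, of n] by (rule integral_distr[OF Z_meas H_meas]) auto
  moreover have "(\<integral>w. H e0 w \<partial>P) = (\<integral>\<omega>. H e0 (Z0 \<omega>) \<partial>\<Omega>)"
    unfolding Z0_distr[symmetric] by (rule integral_distr) (auto intro: H_meas)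
  ultimately show ?thesis by simp
qed

lemma cdf_pareto:
  assumes N: "prob_space N" and V[measurable]: "V \<in> borel_measurable N"
    and tail: "\<And>y. y \<ge> 1 \<Longrightarrow> measure N {\<omega> \<in> space N. y < V \<omega>} = y powr \<rho>"
  shows "cdf (distr N borel V) t = (if t < 1 then 0 else 1 - t powr \<rho>)"
proof -
  interpret prob_space N by fact
  have cdf_eq: "cdf (distr N borel V) t = prob (V -` {..t} \<inter> space N)" for t
    by (simp add: cdf_def measure_distr)
  have upper: "prob (V -` {..t} \<inter> space N) = 1 - t powr \<rho>" if "t \<ge> 1" for t
  proof -
    have "V -` {..t} \<inter> space N = space N - {\<omega> \<in> space N. t < V \<omega>}" by auto
    then show ?thesis using tail[OF that] by (simp add: prob_compl)
  qed
  show ?thesis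
  proof (cases "t < 1")
    case True
    have "prob (V -` {..t} \<inter> space N) \<le> prob (V -` {..1} \<inter> space N)"
      using True by (intro finite_measure_mono) auto
    also have "\<dots> = 0" using upper[of 1] by simp
    finally show ?thesis using True by (simp add: cdf_eq measure_nonneg antisym)
  qed (simp add: cdf_eq upper)
qed

lemma cdf_conditional_excess:
  fixes Z :: "'a \<Rightarrow> real"
  assumes M: "prob_space M" and Z[measurable]: "Z \<in> borel_measurable M"
    and s: "s > 0" and tail_pos: "measure M {\<omega> \<in> space M. s < Z \<omega>} > 0"
  defines "T \<equiv> \<lambda>x. measure M {\<omega> \<in> space M. x < Z \<omega>}"
  shows "cdf (distr (uniform_measure M {\<omega> \<in> space M. s < Z \<omega>}) borel (\<lambda>\<omega>. Z \<omega> / s)) t =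
     (if t < 1 then 0 else 1 - T (t * s) / T s)"
proof -
  interpret prob_space M by fact
  let ?S = "\<lambda>x. {\<omega> \<in> space M. x < Z \<omega>}"
  have "cdf (distr (uniform_measure M (?S s)) borel (\<lambda>\<omega>. Z \<omega> / s)) t =
      measure (uniform_measure M (?S s)) ((\<lambda>\<omega>. Z \<omega> / s) -` {..t} \<inter> space M)"
    by (simp add: cdf_def measure_distr)
  also have "\<dots> = measure M (?S s \<inter> ((\<lambda>\<omega>. Z \<omega> / s) -` {..t} \<inter> space M)) / T s"
    unfolding T_def using tail_pos by (intro measure_uniform_measure) (auto simp: emeasure_eq_measure)
  also have "?S s \<inter> ((\<lambda>\<omega>. Z \<omega> / s) -` {..t} \<inter> space M) = (if t < 1 then {} else ?S s - ?S (t * s))"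
  proof (cases "t < 1")
    case True
    have "s * t < s" using s True by simp
    with s True show ?thesis by (auto simp: divide_le_eq mult.commute) (use \<open>s * t < s\<close> in linarith)
  qed (use s in \<open>auto simp: divide_le_eq not_less mult.commute\<close>)
  also have "measure M (if t < 1 then {} else ?S s - ?S (t * s)) / T s = (if t < 1 then 0 else 1 - T (t * s) / T s)"
  proof (cases "t < 1")
    case False
    then have "?S (t * s) \<subseteq> ?S s"
      using s by (auto intro: order.strict_trans1[of s "t * s"])
    then show ?thesis
      using False tail_pos by (simp add: T_def finite_measure_Diff diff_divide_distrib)
  qed simp
  finally show ?thesis .
qed

lemma regularly_varying_tail_weak_conv:
  fixes Z :: "'a \<Rightarrow> real" and s :: "nat \<Rightarrow> real"
  assumes M: "prob_space M" and Z: "Z \<in> borel_measurable M"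
    and RV: "regularly_varying \<rho> (\<lambda>x. measure M {\<omega> \<in> space M. x < Z \<omega>})"
    and P: "\<And>t. cdf P t = (if t < 1 then 0 else 1 - t powr \<rho>)"
    and s: "filterlim s at_top sequentially" and s_pos: "\<And>n. s n > 0"
    and tail_pos: "\<And>n. measure M {\<omega> \<in> space M. s n < Z \<omega>} > 0"
  shows "weak_conv_m (\<lambda>n. distr (uniform_measure M {\<omega> \<in> space M. s n < Z \<omega>}) borel (\<lambda>\<omega>. Z \<omega> / s n)) P"
  unfolding weak_conv_m_def weak_conv_def
proof (intro allI impI)
  fix t :: real
  let ?T = "\<lambda>x. measure M {\<omega> \<in> space M. x < Z \<omega>}"
  note cdf_n = cdf_conditional_excess[OF M Z s_pos tail_pos]
  show "(\<lambda>n. cdf (distr (uniform_measure M {\<omega> \<in> space M. s n < Z \<omega>}) borel (\<lambda>\<omega>. Z \<omega> / s n)) t)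
      \<longlonglongrightarrow> cdf P t"
  proof (cases "t < 1")
    case False
    then have "((\<lambda>x. ?T (t * x) / ?T x) \<longlongrightarrow> t powr \<rho>) at_top"
      using RV unfolding regularly_varying_def by simp
    then have "(\<lambda>n. ?T (t * s n) / ?T (s n)) \<longlonglongrightarrow> t powr \<rho>"
      by (rule filterlim_compose[OF _ s])
    then show ?thesis using False by (simp add: cdf_n P tendsto_diff)
  qed (simp add: cdf_n P)
qed

lemma tendsto_at_topI_sequentially_ge:
  fixes f :: "real \<Rightarrow> 'b::first_countable_topology"
  assumes lim: "\<And>s. filterlim s at_top sequentially \<Longrightarrow> (\<And>n. s n \<ge> a) \<Longrightarrow> (\<lambda>n. f (s n)) \<longlonglongrightarrow> y"
  shows "(f \<longlongrightarrow> y) at_top"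
proof -
  have "((\<lambda>x. f (max x a)) \<longlongrightarrow> y) at_top"
  proof (rule tendsto_at_topI_sequentially)
    fix s :: "nat \<Rightarrow> real" assume "filterlim s at_top sequentially"
    then have "filterlim (\<lambda>n. max (s n) a) at_top sequentially"
      by (rule filterlim_at_top_mono) auto
    then show "(\<lambda>n. f (max (s n) a)) \<longlonglongrightarrow> y" by (rule lim) simp
  qed
  moreover have "eventually (\<lambda>x. f (max x a) = f x) at_top"
    using eventually_ge_at_top[of a] by eventually_elim simp
  ultimately show ?thesis by (rule Lim_transform_eventually)
qed

section \<open>The deterministic recursions\<close>

text \<open>The chain normalised at level \<open>x\<close>, written as a function of the scale \<open>e = 1/x\<close>, the
  normalised start \<open>z\<close>, the coins \<open>u\<close> and the multipliers \<open>r\<close>. The reset value \<open>1\<close> becomes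
  \<open>e powr (\<phi> ^ j)\<close>, which vanishes at \<open>e = 0\<close>; the cut-offs at \<open>0\<close> make the recursion
  continuous in \<open>(e, z)\<close> on the whole plane.\<close>

primrec scaled_path :: "real \<Rightarrow> real \<Rightarrow> real \<Rightarrow> real \<Rightarrow> (nat \<Rightarrow> real) \<Rightarrow> (nat \<Rightarrow> real) \<Rightarrow> nat \<Rightarrow> real" where
  "scaled_path \<phi> \<eta> e z u r 0 = z"
| "scaled_path \<phi> \<eta> e z u r (Suc j) = r (Suc j) *
     (if \<eta> \<le> u (Suc j) then max 0 (scaled_path \<phi> \<eta> e z u r j) powr \<phi> else max 0 e powr (\<phi> ^ Suc j))"

primrec limit_path :: "real \<Rightarrow> real \<Rightarrow> (nat \<Rightarrow> real) \<Rightarrow> nat \<Rightarrow> real" where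
  "limit_path \<phi> z w 0 = z"
| "limit_path \<phi> z w (Suc j) = max 0 (limit_path \<phi> z w j) powr \<phi> * w (Suc j)"

definition trunc_vec :: "nat \<Rightarrow> (nat \<Rightarrow> real) \<Rightarrow> nat \<Rightarrow> real" where
  "trunc_vec h v = (\<lambda>j. if j \<le> h then v j else 0)"

lemma scaled_path_eq:
  assumes x: "x > 0" and start: "\<xi> 0 \<ge> 0" and coeff: "\<And>t. 1 \<le> t \<Longrightarrow> t \<le> j \<Longrightarrow> \<rho> t \<ge> 0"
    and rec: "\<And>t. \<xi> (Suc t) = \<rho> (Suc t) * (if \<eta> \<le> u (Suc t) then \<xi> t powr \<phi> else 1)"
  shows "\<xi> j / x powr (\<phi> ^ j) = scaled_path \<phi> \<eta> (1 / x) (\<xi> 0 / x) u \<rho> j \<and> \<xi> j \<ge> 0"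
  using coeff
proof (induction j)
  case (Suc j)
  then have IH: "\<xi> j / x powr (\<phi> ^ j) = scaled_path \<phi> \<eta> (1 / x) (\<xi> 0 / x) u \<rho> j"
    and nonneg: "\<xi> j \<ge> 0" and \<rho>_nonneg: "\<rho> (Suc j) \<ge> 0" by auto
  have scale_pow: "\<xi> j powr \<phi> / x powr (\<phi> ^ Suc j) = (\<xi> j / x powr (\<phi> ^ j)) powr \<phi>"
    using nonneg x by (simp add: powr_divide powr_powr mult.commute)
  have scale_one: "1 / x powr (\<phi> ^ Suc j) = (1 / x) powr (\<phi> ^ Suc j)"
    using x by (simp add: powr_divide)
  have "\<xi> (Suc j) / x powr (\<phi> ^ Suc j) =
      \<rho> (Suc j) * (if \<eta> \<le> u (Suc j) then \<xi> j powr \<phi> / x powr (\<phi> ^ Suc j) else 1 / x powr (\<phi> ^ Suc j))"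
    by (simp add: rec)
  also have "\<dots> = \<rho> (Suc j) *
      (if \<eta> \<le> u (Suc j) then (\<xi> j / x powr (\<phi> ^ j)) powr \<phi> else (1 / x) powr (\<phi> ^ Suc j))"
    by (simp only: scale_pow scale_one)
  also have "\<dots> = scaled_path \<phi> \<eta> (1 / x) (\<xi> 0 / x) u \<rho> (Suc j)"
    using nonneg x by (simp add: IH[symmetric])
  finally show ?case using \<rho>_nonneg by (simp add: rec)
qed (use x start in simp)

lemma limit_path_eq:
  assumes start: "\<zeta> 0 \<ge> 0" and weight: "\<And>t. 1 \<le> t \<Longrightarrow> t \<le> j \<Longrightarrow> w t \<ge> 0"
    and rec: "\<And>t. \<zeta> (Suc t) = \<zeta> t powr \<phi> * w (Suc t)"
  shows "\<zeta> j = limit_path \<phi> (\<zeta> 0) w j \<and> \<zeta> j \<ge> 0"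
  using weight by (induction j) (auto simp: rec start)

lemma trunc_scaled_path:
  assumes x: "x > 0" and start: "\<xi> 0 \<ge> 0" and coeff: "\<And>t. 1 \<le> t \<Longrightarrow> t \<le> h \<Longrightarrow> \<rho> t \<ge> 0"
    and rec: "\<And>t. \<xi> (Suc t) = \<rho> (Suc t) * (if \<eta> \<le> u (Suc t) then \<xi> t powr \<phi> else 1)"
  shows "trunc_vec h (\<lambda>j. \<xi> j / x powr (\<phi> ^ j)) = trunc_vec h (scaled_path \<phi> \<eta> (1 / x) (\<xi> 0 / x) u \<rho>)"
proof -
  have "\<xi> j / x powr (\<phi> ^ j) = scaled_path \<phi> \<eta> (1 / x) (\<xi> 0 / x) u \<rho> j" if "j \<le> h" for j
    using scaled_path_eq[OF x start _ rec, of j] coeff that by simp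
  then show ?thesis by (simp add: trunc_vec_def fun_eq_iff)
qed

lemma trunc_limit_path:
  assumes start: "\<zeta> 0 \<ge> 0" and weight: "\<And>t. 1 \<le> t \<Longrightarrow> t \<le> h \<Longrightarrow> w t \<ge> 0"
    and rec: "\<And>t. \<zeta> (Suc t) = \<zeta> t powr \<phi> * w (Suc t)"
  shows "trunc_vec h \<zeta> = trunc_vec h (limit_path \<phi> (\<zeta> 0) w)"
proof -
  have "limit_path \<phi> (\<zeta> 0) w j = \<zeta> j" if "j \<le> h" for j
    using limit_path_eq[OF start _ rec, of j] weight that by simp
  then show ?thesis by (simp add: trunc_vec_def fun_eq_iff)
qed

lemma scaled_path_at_zero:
  "scaled_path \<phi> \<eta> 0 z u r j = limit_path \<phi> z (\<lambda>i. r i * (if \<eta> \<le> u i then 1 else 0)) j"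
  by (induction j) auto

lemma trunc_scaled_path_cong:
  assumes "\<And>i. 1 \<le> i \<Longrightarrow> i \<le> h \<Longrightarrow> u i = u' i" "\<And>i. 1 \<le> i \<Longrightarrow> i \<le> h \<Longrightarrow> r i = r' i"
  shows "trunc_vec h (scaled_path \<phi> \<eta> e z u r) = trunc_vec h (scaled_path \<phi> \<eta> e z u' r')"
proof -
  have "scaled_path \<phi> \<eta> e z u r j = scaled_path \<phi> \<eta> e z u' r' j" if "j \<le> h" for j
    using that by (induction j) (auto simp: assms)
  then show ?thesis by (simp add: trunc_vec_def fun_eq_iff)
qed

lemma trunc_limit_path_cong:
  assumes "\<And>i. 1 \<le> i \<Longrightarrow> i \<le> h \<Longrightarrow> w i = w' i"
  shows "trunc_vec h (limit_path \<phi> z w) = trunc_vec h (limit_path \<phi> z w')"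
proof -
  have "limit_path \<phi> z w j = limit_path \<phi> z w' j" if "j \<le> h" for j
    using that by (induction j) (auto simp: assms)
  then show ?thesis by (simp add: trunc_vec_def fun_eq_iff)
qed

lemma continuous_scaled_path:
  assumes "\<phi> > 0"
  shows "continuous_on UNIV (\<lambda>p::real \<times> real. scaled_path \<phi> \<eta> (fst p) (snd p) u r j)"
proof (induction j)
  case (Suc j)
  have "continuous_on UNIV (\<lambda>p::real \<times> real. max 0 (scaled_path \<phi> \<eta> (fst p) (snd p) u r j) powr \<phi>)"
    by (rule continuous_on_powr') (use assms Suc in \<open>auto intro!: continuous_intros\<close>)
  moreover have "continuous_on UNIV (\<lambda>p::real \<times> real. max 0 (fst p) powr (\<phi> ^ Suc j))"
    by (rule continuous_on_powr') (use assms in \<open>auto intro!: continuous_intros\<close>)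
  ultimately show ?case by (cases "\<eta> \<le> u (Suc j)") (auto intro!: continuous_intros)
qed (simp add: continuous_on_snd continuous_on_id)

lemma continuous_on_trunc_vec:
  assumes "\<And>j. j \<le> h \<Longrightarrow> continuous_on S (\<lambda>x. v x j)"
  shows "continuous_on S (\<lambda>x. trunc_vec h (v x))"
  unfolding trunc_vec_def
proof (intro continuous_on_coordinatewise_then_product)
  show "continuous_on S (\<lambda>x. if j \<le> h then v x j else 0)" for j
    using assms by (cases "j \<le> h") auto
qed

lemma measurable_trunc_vec:
  assumes "\<And>j. j \<le> h \<Longrightarrow> (\<lambda>x. v x j) \<in> borel_measurable M"
  shows "(\<lambda>x. trunc_vec h (v x)) \<in> borel_measurable M"
  unfolding trunc_vec_def
proof (intro measurable_coordinatewise_then_product)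
  show "(\<lambda>x. if j \<le> h then v x j else 0) \<in> borel_measurable M" for j
    using assms by (cases "j \<le> h") auto
qed

lemma measurable_scaled_path:
  assumes [measurable]: "e \<in> borel_measurable M" "z \<in> borel_measurable M"
    and u: "\<And>i. 1 \<le> i \<Longrightarrow> i \<le> h \<Longrightarrow> (\<lambda>x. u x i) \<in> borel_measurable M"
    and r: "\<And>i. 1 \<le> i \<Longrightarrow> i \<le> h \<Longrightarrow> (\<lambda>x. r x i) \<in> borel_measurable M"
  shows "(\<lambda>x. trunc_vec h (scaled_path \<phi> \<eta> (e x) (z x) (u x) (r x))) \<in> borel_measurable M"
proof (rule measurable_trunc_vec)
  show "(\<lambda>x. scaled_path \<phi> \<eta> (e x) (z x) (u x) (r x) j) \<in> borel_measurable M" if "j \<le> h" for j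
    using that
  proof (induction j)
    case (Suc j)
    then have [measurable]: "(\<lambda>x. scaled_path \<phi> \<eta> (e x) (z x) (u x) (r x) j) \<in> borel_measurable M"
      "(\<lambda>x. u x (Suc j)) \<in> borel_measurable M" "(\<lambda>x. r x (Suc j)) \<in> borel_measurable M"
      using u r by auto
    show ?case by simp
  qed simp
qed

lemma measurable_limit_path:
  assumes [measurable]: "z \<in> borel_measurable M"
    and w: "\<And>i. 1 \<le> i \<Longrightarrow> i \<le> h \<Longrightarrow> (\<lambda>x. w x i) \<in> borel_measurable M"
  shows "(\<lambda>x. trunc_vec h (limit_path \<phi> (z x) (w x))) \<in> borel_measurable M"
proof (rule measurable_trunc_vec)
  show "(\<lambda>x. limit_path \<phi> (z x) (w x) j) \<in> borel_measurable M" if "j \<le> h" for j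
    using that
  proof (induction j)
    case (Suc j)
    then have [measurable]: "(\<lambda>x. limit_path \<phi> (z x) (w x) j) \<in> borel_measurable M"
      "(\<lambda>x. w x (Suc j)) \<in> borel_measurable M"
      using w by auto
    show ?case by simp
  qed simp
qed

section \<open>The model\<close>

locale power_chain =
  fixes M :: "'a measure" and N :: "'b measure"
    and U R X :: "nat \<Rightarrow> 'a \<Rightarrow> real" and F_R :: "real measure"
    and Y W :: "nat \<Rightarrow> 'b \<Rightarrow> real"
    and \<phi> \<eta> \<alpha> :: real and h :: nat
  assumes M: "prob_space M"
    and phi: "\<phi> > 0" and eta: "0 \<le> \<eta>" "\<eta> < 1"
    and indep: "prob_space.indep_vars M (\<lambda>_. borel)
        (\<lambda>i. case i of Inl t \<Rightarrow> U t | Inr (Inl t) \<Rightarrow> R t | Inr (Inr _) \<Rightarrow> X 0)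
        ({Inl t | t. t \<ge> 1} \<union> {Inr (Inl t) | t. t \<ge> 1} \<union> {Inr (Inr ())})"
    and U_unif: "\<And>t. t \<ge> 1 \<Longrightarrow> distr M borel (U t) = uniform_measure lborel {0..1}"
    and R_distr: "\<And>t. t \<ge> 1 \<Longrightarrow> distr M borel (R t) = F_R"
    and R_nonneg: "\<And>t. t \<ge> 1 \<Longrightarrow> AE \<omega> in M. R t \<omega> \<ge> 0"
    and X0_nonneg: "AE \<omega> in M. X 0 \<omega> \<ge> 0"
    and X0_tail: "regularly_varying (- \<alpha>) (\<lambda>x. measure M {\<omega> \<in> space M. x < X 0 \<omega>})"
    and X_rec: "\<And>t \<omega>. X (Suc t) \<omega> =
        R (Suc t) \<omega> * (if \<eta> \<le> U (Suc t) \<omega> then X t \<omega> powr \<phi> else 1)"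
    and h: "h \<ge> 1"
    and N: "prob_space N"
    and Y_indep: "prob_space.indep_vars N (\<lambda>_. borel)
        (\<lambda>j. if j = 0 then Y 0 else W j) {0..h}"
    and Y0_tail: "\<And>y. y \<ge> 1 \<Longrightarrow> measure N {\<omega> \<in> space N. y < Y 0 \<omega>} = y powr (- \<alpha>)"
    and W_distr: "\<And>j A. j \<in> {1..h} \<Longrightarrow> A \<in> sets borel \<Longrightarrow>
        measure N (W j -` A \<inter> space N) = (1 - \<eta>) * measure F_R A + \<eta> * indicator A 0"
    and Y_rec: "\<And>j \<omega>. Y (Suc j) \<omega> = Y j \<omega> powr \<phi> * W (Suc j) \<omega>"
begin

sublocale PM: prob_space M by (rule M)
sublocale PN: prob_space N by (rule N)

definition inputs :: "nat + (nat + unit) \<Rightarrow> 'a \<Rightarrow> real" where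
  "inputs = (\<lambda>i. case i of Inl t \<Rightarrow> U t | Inr (Inl t) \<Rightarrow> R t | Inr (Inr _) \<Rightarrow> X 0)"

definition input_index :: "(nat + (nat + unit)) set" where
  "input_index = {Inl t | t. t \<ge> 1} \<union> {Inr (Inl t) | t. t \<ge> 1} \<union> {Inr (Inr ())}"

lemma indep_inputs: "PM.indep_vars (\<lambda>_. borel) inputs input_index"
  using indep unfolding inputs_def input_index_def .

lemma measurable_input: "i \<in> input_index \<Longrightarrow> inputs i \<in> borel_measurable M"
  using indep_inputs unfolding PM.indep_vars_def by auto

lemma measurable_U[measurable]: "1 \<le> t \<Longrightarrow> U t \<in> borel_measurable M"
  using measurable_input[of "Inl t"] by (auto simp: input_index_def inputs_def)

lemma measurable_R[measurable]: "1 \<le> t \<Longrightarrow> R t \<in> borel_measurable M"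
  using measurable_input[of "Inr (Inl t)"] by (auto simp: input_index_def inputs_def)

lemma measurable_X0[measurable]: "X 0 \<in> borel_measurable M"
  using measurable_input[of "Inr (Inr ())"] by (auto simp: input_index_def inputs_def)

lemma measurable_X[measurable]: "X j \<in> borel_measurable M"
proof (induction j)
  case (Suc j)
  then have [measurable]: "X j \<in> borel_measurable M" .
  show ?case unfolding X_rec[abs_def] by measurable
qed simp

lemma measurable_Y0[measurable]: "Y 0 \<in> borel_measurable N"
  using Y_indep unfolding PN.indep_vars_def by (auto dest: bspec[of _ _ 0])

lemma measurable_W[measurable]: "1 \<le> j \<Longrightarrow> j \<le> h \<Longrightarrow> W j \<in> borel_measurable N"
  using Y_indep unfolding PN.indep_vars_def by (auto dest: bspec[of _ _ j])

lemma measurable_Y: "j \<le> h \<Longrightarrow> Y j \<in> borel_measurable N"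
proof (induction j)
  case (Suc j)
  then have [measurable]: "Y j \<in> borel_measurable N" "W (Suc j) \<in> borel_measurable N" by auto
  show ?case unfolding Y_rec[abs_def] by measurable
qed simp

definition exceed :: "real \<Rightarrow> 'a set" where
  "exceed x = {\<omega> \<in> space M. x < X 0 \<omega>}"

lemma exceed_sets[measurable]: "exceed x \<in> sets M"
  unfolding exceed_def by measurable

lemma AE_normalised_chain:
  assumes x: "x > 0"
  shows "AE \<omega> in M. trunc_vec h (\<lambda>j. X j \<omega> / x powr (\<phi> ^ j)) =
      trunc_vec h (scaled_path \<phi> \<eta> (1 / x) (X 0 \<omega> / x) (\<lambda>i. U i \<omega>) (\<lambda>i. R i \<omega>))"
proof -
  have "AE \<omega> in M. \<forall>t\<in>{1..h}. R t \<omega> \<ge> 0"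
    by (rule AE_finite_allI) (auto intro: R_nonneg)
  with X0_nonneg show ?thesis
    by eventually_elim (rule trunc_scaled_path[OF x], auto simp: X_rec)
qed

text \<open>The law \<open>G\<close> of the \<open>W j\<close> charges no negative numbers, since \<open>F_R\<close> does not.\<close>

lemma AE_W_nonneg:
  assumes j: "j \<in> {1..h}"
  shows "AE \<omega> in N. W j \<omega> \<ge> 0"
proof -
  have [measurable]: "W j \<in> borel_measurable N" using j by auto
  have "measure F_R {..<0} = measure M (R 1 -` {..<0} \<inter> space M)"
    using R_distr[of 1, symmetric] by (simp add: measure_distr)
  also have "\<dots> = 0"
  proof -
    have "AE \<omega> in M. \<omega> \<notin> R 1 -` {..<0} \<inter> space M"
      using R_nonneg[OF order_refl] by eventually_elim auto
    then show ?thesis by (subst PM.prob_eq_0) auto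
  qed
  finally have "measure N (W j -` {..<0} \<inter> space N) = 0"
    using W_distr[OF j, of "{..<0}"] by simp
  then have "AE \<omega> in N. \<omega> \<notin> W j -` {..<0} \<inter> space N"
    by (subst PN.prob_eq_0[symmetric]) auto
  moreover have "AE \<omega> in N. \<omega> \<in> space N" by simp
  ultimately show ?thesis by eventually_elim auto
qed

lemma AE_limit_chain:
  "AE \<omega> in N. trunc_vec h (\<lambda>j. Y j \<omega>) = trunc_vec h (limit_path \<phi> (Y 0 \<omega>) (\<lambda>i. W i \<omega>))"
proof -
  have "PN.prob {\<omega> \<in> space N. 1 < Y 0 \<omega>} = 1" using Y0_tail[of 1] by simp
  then have "AE \<omega> in N. \<omega> \<in> {\<omega> \<in> space N. 1 < Y 0 \<omega>}" by (rule PN.AE_prob_1)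
  then have "AE \<omega> in N. 1 < Y 0 \<omega>" by eventually_elim simp
  moreover have "AE \<omega> in N. \<forall>j\<in>{1..h}. W j \<omega> \<ge> 0"
    by (rule AE_finite_allI) (auto intro: AE_W_nonneg)
  ultimately show ?thesis
    by eventually_elim (rule trunc_limit_path, auto simp: Y_rec)
qed

text \<open>The thinned multipliers \<open>R j \<cdot> 1{\<eta> \<le> U j}\<close>, which drive the scaled path in the limit
  \<open>e = 0\<close>, are independent and have the same laws as the \<open>W j\<close>.\<close>

definition thinned :: "nat \<Rightarrow> 'a \<Rightarrow> real" where
  "thinned j \<omega> = R j \<omega> * (if \<eta> \<le> U j \<omega> then 1 else 0)"

lemma measurable_thinned[measurable]: "1 \<le> j \<Longrightarrow> thinned j \<in> borel_measurable M"
  unfolding thinned_def[abs_def] by measurable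

lemma distr_thinned:
  assumes j: "j \<in> {1..h}"
  shows "distr M borel (thinned j) = distr N borel (W j)"
proof (rule measure_eqI)
  fix A assume "A \<in> sets (distr M borel (thinned j))"
  then have A[measurable]: "A \<in> sets borel" by simp
  have [measurable]: "W j \<in> borel_measurable N" using j by auto
  have "PM.indep_var (PiM {Inl j} (\<lambda>_. borel)) (\<lambda>\<omega>. \<lambda>i\<in>{Inl j}. inputs i \<omega>)
      (PiM {Inr (Inl j)} (\<lambda>_. borel)) (\<lambda>\<omega>. \<lambda>i\<in>{Inr (Inl j)}. inputs i \<omega>)"
    using j by (intro PM.indep_var_restrict[OF indep_inputs]) (auto simp: input_index_def)
  then have "PM.indep_var borel (\<lambda>\<omega>. (\<lambda>i\<in>{Inl j}. inputs i \<omega>) (Inl j))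
      borel (\<lambda>\<omega>. (\<lambda>i\<in>{Inr (Inl j)}. inputs i \<omega>) (Inr (Inl j)))"
    by (rule PM.indep_var_compose[unfolded comp_def]) (auto intro: measurable_component_singleton)
  then have ind: "PM.indep_var borel (U j) borel (R j)"
    by (simp add: inputs_def)
  have j1: "1 \<le> j" using j by simp
  have "measure M (thinned j -` A \<inter> space M) = (1 - \<eta>) * measure (distr M borel (R j)) A + \<eta> * indicator A 0"
    unfolding thinned_def[abs_def]
    by (rule measure_thinned_variable[OF M ind U_unif[OF j1] eta(1) _ A]) (use eta in simp)
  also have "\<dots> = measure N (W j -` A \<inter> space N)"
    by (simp add: R_distr[OF j1] W_distr[OF j A])
  finally have "measure M (thinned j -` A \<inter> space M) = measure N (W j -` A \<inter> space N)" .
  then show "emeasure (distr M borel (thinned j)) A = emeasure (distr N borel (W j)) A"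
    using j by (simp add: emeasure_distr PM.emeasure_eq_measure PN.emeasure_eq_measure)
qed simp

lemma indep_thinned: "PM.indep_vars (\<lambda>_. borel) thinned {1..h}"
proof -
  let ?K = "\<lambda>j::nat. {Inl j, Inr (Inl j)} :: (nat + (nat + unit)) set"
  have "PM.indep_vars (\<lambda>j. PiM (?K j) (\<lambda>_. borel)) (\<lambda>j \<omega>. \<lambda>i\<in>?K j. inputs i \<omega>) {1..h}"
    by (rule PM.indep_vars_restrict[OF indep_inputs])
       (auto simp: input_index_def disjoint_family_on_def)
  then have "PM.indep_vars (\<lambda>_. borel)
      (\<lambda>j \<omega>. (\<lambda>b. b (Inr (Inl j)) * (if \<eta> \<le> b (Inl j) then 1 else 0)) (\<lambda>i\<in>?K j. inputs i \<omega>)) {1..h}"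
  proof (rule PM.indep_vars_compose2)
    fix j :: nat
    have [measurable]: "(\<lambda>b. b (Inr (Inl j))) \<in> borel_measurable (PiM (?K j) (\<lambda>_. borel))"
      "(\<lambda>b. b (Inl j)) \<in> borel_measurable (PiM (?K j) (\<lambda>_. borel))"
      by (rule measurable_component_singleton, simp)+
    show "(\<lambda>b. b (Inr (Inl j)) * (if \<eta> \<le> b (Inl j) then 1 else 0)) \<in> borel_measurable (PiM (?K j) (\<lambda>_. borel))"
      by measurable
  qed
  moreover have "?thesis \<longleftrightarrow> PM.indep_vars (\<lambda>_. borel)
      (\<lambda>j \<omega>. (\<lambda>b. b (Inr (Inl j)) * (if \<eta> \<le> b (Inl j) then 1 else 0)) (\<lambda>i\<in>?K j. inputs i \<omega>)) {1..h}"
    by (rule PM.indep_vars_cong) (auto simp: thinned_def inputs_def fun_eq_iff)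
  ultimately show ?thesis by simp
qed

lemma indep_W: "PN.indep_vars (\<lambda>_. borel) W {1..h}"
proof -
  have "PN.indep_vars (\<lambda>_. borel) (\<lambda>j. if j = 0 then Y 0 else W j) {1..h}"
    by (rule PN.indep_vars_subset[OF Y_indep]) auto
  moreover have "?thesis \<longleftrightarrow> PN.indep_vars (\<lambda>_. borel) (\<lambda>j. if j = 0 then Y 0 else W j) {1..h}"
    by (rule PN.indep_vars_cong) auto
  ultimately show ?thesis by simp
qed

definition path_kernel :: "((nat \<Rightarrow> real) \<Rightarrow> real) \<Rightarrow> real \<Rightarrow> real \<Rightarrow> real" where
  "path_kernel g e z = (\<integral>\<omega>. g (trunc_vec h (scaled_path \<phi> \<eta> e z (\<lambda>i. U i \<omega>) (\<lambda>i. R i \<omega>))) \<partial>M)"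

lemma measurable_scaled_inputs:
  "(\<lambda>\<omega>. trunc_vec h (scaled_path \<phi> \<eta> e z (\<lambda>i. U i \<omega>) (\<lambda>i. R i \<omega>))) \<in> borel_measurable M"
  by (rule measurable_scaled_path) auto

context
  fixes g :: "(nat \<Rightarrow> real) \<Rightarrow> real" and C :: real
  assumes g_cont: "continuous_on UNIV g" and g_bound: "\<And>v. \<bar>g v\<bar> \<le> C"
begin

lemma measurable_g: "f \<in> borel_measurable M' \<Longrightarrow> (\<lambda>\<omega>. g (f \<omega>)) \<in> borel_measurable M'"
  by (rule measurable_compose[OF _ borel_measurable_continuous_onI[OF g_cont]])

lemma path_kernel_bound: "\<bar>path_kernel g e z\<bar> \<le> C"
proof -
  let ?f = "\<lambda>\<omega>. g (trunc_vec h (scaled_path \<phi> \<eta> e z (\<lambda>i. U i \<omega>) (\<lambda>i. R i \<omega>)))"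
  have "integrable M ?f"
    by (rule PM.integrable_const_bound[where B=C]) (auto simp: g_bound intro: measurable_g measurable_scaled_inputs)
  moreover have "- C \<le> g v" "g v \<le> C" for v
    using g_bound[of v] by (auto simp: abs_le_iff)
  ultimately have "- C \<le> path_kernel g e z \<and> path_kernel g e z \<le> C"
    unfolding path_kernel_def by (auto intro!: PM.integral_ge_const PM.integral_le_const)
  then show ?thesis by auto
qed

text \<open>Continuity of the path kernel in the frozen parameters, by dominated convergence; this is
  where the continuity of the scaled path at the boundary \<open>e = 0\<close> enters.\<close>

lemma path_kernel_continuous: "continuous_on UNIV (\<lambda>p. path_kernel g (fst p) (snd p))"
  unfolding path_kernel_def
proof (rule continuous_on_parametric_integral[where C=C])
  show "finite_measure M" by (rule PM.finite_measure_axioms)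
  show "(\<lambda>\<omega>. g (trunc_vec h (scaled_path \<phi> \<eta> (fst p) (snd p) (\<lambda>i. U i \<omega>) (\<lambda>i. R i \<omega>)))) \<in> borel_measurable M"
    for p :: "real \<times> real" by (intro measurable_g measurable_scaled_inputs)
  show "continuous_on UNIV (\<lambda>p. g (trunc_vec h (scaled_path \<phi> \<eta> (fst p) (snd p) (\<lambda>i. U i \<omega>) (\<lambda>i. R i \<omega>))))"
    for \<omega>
    by (rule continuous_on_compose2[OF g_cont continuous_on_trunc_vec])
       (auto intro: continuous_scaled_path[OF phi])
qed (rule g_bound)

lemma measurable_path_kernel:
  "f1 \<in> borel_measurable M' \<Longrightarrow> f2 \<in> borel_measurable M' \<Longrightarrow>
    (\<lambda>\<omega>. path_kernel g (f1 \<omega>) (f2 \<omega>)) \<in> borel_measurable M'"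
  by (rule borel_measurable_continuous_Pair[OF _ _ path_kernel_continuous])

text \<open>Conditioning on the starting value: \<open>X 0\<close> is independent of the coins and multipliers
  \<open>U t, R t\<close> (\<open>1 \<le> t \<le> h\<close>), so integrating over the latter first replaces the path functional by
  the path kernel evaluated at \<open>X 0\<close>.\<close>

lemma integral_exceed_path_kernel:
  "(\<integral>\<omega>. indicator (exceed x) \<omega> * g (trunc_vec h (scaled_path \<phi> \<eta> (1/x) (X 0 \<omega> / x) (\<lambda>i. U i \<omega>) (\<lambda>i. R i \<omega>))) \<partial>M)
     = (\<integral>\<omega>. indicator (exceed x) \<omega> * path_kernel g (1/x) (X 0 \<omega> / x) \<partial>M)"
proof -
  define i0 :: "nat + (nat + unit)" where "i0 = Inr (Inr ())"
  define J :: "(nat + (nat + unit)) set" where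
    "J = {Inl t | t. 1 \<le> t \<and> t \<le> h} \<union> {Inr (Inl t) | t. 1 \<le> t \<and> t \<le> h}"
  let ?P = "PiM {i0} (\<lambda>_. borel) \<Otimes>\<^sub>M PiM J (\<lambda>_. borel)"
  define F where "F p = indicator {x<..} (fst p i0) *
     g (trunc_vec h (scaled_path \<phi> \<eta> (1/x) (fst p i0 / x) (\<lambda>j. snd p (Inl j)) (\<lambda>j. snd p (Inr (Inl j)))))"
    for p :: "(nat + (nat + unit) \<Rightarrow> real) \<times> (nat + (nat + unit) \<Rightarrow> real)"
  let ?A = "\<lambda>\<omega>. \<lambda>i\<in>{i0}. inputs i \<omega>" and ?B = "\<lambda>\<omega>. \<lambda>i\<in>J. inputs i \<omega>"
  have ind: "PM.indep_var (PiM {i0} (\<lambda>_. borel)) ?A (PiM J (\<lambda>_. borel)) ?B"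
    by (rule PM.indep_var_restrict[OF indep_inputs]) (auto simp: i0_def J_def input_index_def)
  have [measurable]: "(\<lambda>p. fst p i0) \<in> borel_measurable ?P"
    by (rule measurable_compose[OF measurable_fst measurable_component_singleton]) simp
  have "(\<lambda>p. trunc_vec h (scaled_path \<phi> \<eta> (1/x) (fst p i0 / x) (\<lambda>j. snd p (Inl j)) (\<lambda>j. snd p (Inr (Inl j)))))
      \<in> borel_measurable ?P"
    by (rule measurable_scaled_path)
       (auto intro!: measurable_compose[OF measurable_snd measurable_component_singleton] simp: J_def)
  then have F_meas: "F \<in> borel_measurable ?P"
    unfolding F_def by (intro borel_measurable_times measurable_g) measurable
  have F_bound: "\<bar>F p\<bar> \<le> C" for p
    using g_bound order_trans[OF abs_ge_zero g_bound] by (simp add: F_def abs_mult indicator_def)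
  have restrict_J: "trunc_vec h (scaled_path \<phi> \<eta> e z (\<lambda>j. ?B \<omega> (Inl j)) (\<lambda>j. ?B \<omega> (Inr (Inl j)))) =
      trunc_vec h (scaled_path \<phi> \<eta> e z (\<lambda>j. U j \<omega>) (\<lambda>j. R j \<omega>))" for e z \<omega>
    by (rule trunc_scaled_path_cong) (auto simp: J_def inputs_def)
  have "(\<integral>\<omega>. F (?A \<omega>, ?B \<omega>) \<partial>M) = (\<integral>\<omega>. (\<integral>\<omega>'. F (?A \<omega>, ?B \<omega>') \<partial>M) \<partial>M)"
    by (rule integral_indep_var_iterated[OF M ind F_meas F_bound])
  moreover have "F (?A \<omega>, ?B \<omega>) = indicator (exceed x) \<omega> *
      g (trunc_vec h (scaled_path \<phi> \<eta> (1/x) (X 0 \<omega> / x) (\<lambda>i. U i \<omega>) (\<lambda>i. R i \<omega>)))"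
    if "\<omega> \<in> space M" for \<omega>
    unfolding F_def fst_conv snd_conv restrict_J
    using that by (simp add: i0_def inputs_def exceed_def indicator_def)
  moreover have "(\<integral>\<omega>'. F (?A \<omega>, ?B \<omega>') \<partial>M) = indicator (exceed x) \<omega> * path_kernel g (1/x) (X 0 \<omega> / x)"
    if "\<omega> \<in> space M" for \<omega>
    unfolding F_def fst_conv snd_conv restrict_J path_kernel_def
    using that by (simp add: i0_def inputs_def exceed_def indicator_def)
  ultimately show ?thesis
    by (simp cong: Bochner_Integration.integral_cong)
qed

lemma conditional_integral_eq:
  assumes x: "x > 0" and pos: "measure M (exceed x) > 0"
  shows "(LINT \<omega>|uniform_measure M (exceed x). g (trunc_vec h (\<lambda>j. X j \<omega> / x powr (\<phi> ^ j))))
       = (\<integral>w. path_kernel g (1/x) w \<partial>distr (uniform_measure M (exceed x)) borel (\<lambda>\<omega>. X 0 \<omega> / x))"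
proof -
  let ?path = "\<lambda>\<omega>. trunc_vec h (scaled_path \<phi> \<eta> (1/x) (X 0 \<omega> / x) (\<lambda>i. U i \<omega>) (\<lambda>i. R i \<omega>))"
  have path_meas: "(\<lambda>\<omega>. g (?path \<omega>)) \<in> borel_measurable M"
    by (intro measurable_g measurable_scaled_path) auto
  have kernel_meas: "(\<lambda>\<omega>. path_kernel g (1/x) (X 0 \<omega> / x)) \<in> borel_measurable M"
    by (rule measurable_path_kernel) auto
  have "(LINT \<omega>|uniform_measure M (exceed x). g (trunc_vec h (\<lambda>j. X j \<omega> / x powr (\<phi> ^ j))))
      = (LINT \<omega>|uniform_measure M (exceed x). g (?path \<omega>))"
  proof (rule integral_cong_AE)
    show "(\<lambda>\<omega>. g (trunc_vec h (\<lambda>j. X j \<omega> / x powr (\<phi> ^ j)))) \<in> borel_measurable (uniform_measure M (exceed x))"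
      by (auto intro!: measurable_g measurable_trunc_vec)
    show "AE \<omega> in uniform_measure M (exceed x). g (trunc_vec h (\<lambda>j. X j \<omega> / x powr (\<phi> ^ j))) = g (?path \<omega>)"
      by (rule AE_uniform_measureI[OF exceed_sets]) (use AE_normalised_chain[OF x] in \<open>eventually_elim, simp\<close>)
  qed (use path_meas in simp)
  also have "\<dots> = (\<integral>\<omega>. indicator (exceed x) \<omega> * g (?path \<omega>) \<partial>M) / measure M (exceed x)"
    using pos by (intro integral_uniform_measure[OF PM.finite_measure_axioms exceed_sets _ path_meas]) simp
  also have "\<dots> = (\<integral>\<omega>. indicator (exceed x) \<omega> * path_kernel g (1/x) (X 0 \<omega> / x) \<partial>M) / measure M (exceed x)"
    by (simp only: integral_exceed_path_kernel)
  also have "\<dots> = (LINT \<omega>|uniform_measure M (exceed x). path_kernel g (1/x) (X 0 \<omega> / x))"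
    using pos by (intro integral_uniform_measure[OF PM.finite_measure_axioms exceed_sets _ kernel_meas, symmetric]) simp
  also have "\<dots> = (\<integral>w. path_kernel g (1/x) w \<partial>distr (uniform_measure M (exceed x)) borel (\<lambda>\<omega>. X 0 \<omega> / x))"
    by (rule integral_distr[symmetric]) (auto intro: measurable_path_kernel)
  finally show ?thesis .
qed

text \<open>At scale \<open>e = 0\<close> the path kernel only sees the thinned multipliers, which may be replaced by
  the \<open>W j\<close>: both families are independent with the same marginals.\<close>

lemma path_kernel_at_zero: "path_kernel g 0 z = (\<integral>\<omega>. g (trunc_vec h (limit_path \<phi> z (\<lambda>i. W i \<omega>))) \<partial>N)"
proof -
  define F where "F b = g (trunc_vec h (limit_path \<phi> z b))" for b :: "nat \<Rightarrow> real"
  have F_meas: "F \<in> borel_measurable (PiM {1..h} (\<lambda>_. borel))"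
    unfolding F_def by (intro measurable_g measurable_limit_path) (auto intro: measurable_component_singleton)
  have "path_kernel g 0 z = (\<integral>\<omega>. F (\<lambda>i\<in>{1..h}. thinned i \<omega>) \<partial>M)"
    unfolding path_kernel_def F_def scaled_path_at_zero
    by (intro Bochner_Integration.integral_cong refl arg_cong[where f=g] trunc_limit_path_cong)
       (simp add: thinned_def)
  also have "\<dots> = (\<integral>\<omega>. F (\<lambda>i\<in>{1..h}. W i \<omega>) \<partial>N)"
    using h by (intro integral_indep_family_eq[OF M N _ indep_thinned indep_W distr_thinned F_meas]) auto
  also have "\<dots> = (\<integral>\<omega>. g (trunc_vec h (limit_path \<phi> z (\<lambda>i. W i \<omega>))) \<partial>N)"
    unfolding F_def by (intro Bochner_Integration.integral_cong refl arg_cong[where f=g] trunc_limit_path_cong) simp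
  finally show ?thesis .
qed

text \<open>The limit vector has the same structure: \<open>Y 0\<close> is independent of the \<open>W j\<close>, so its
  expectation is the integral of the path kernel at \<open>e = 0\<close> against the Pareto law of \<open>Y 0\<close>.\<close>

lemma limit_integral_eq:
  "(LINT \<omega>|N. g (trunc_vec h (\<lambda>j. Y j \<omega>))) = (\<integral>w. path_kernel g 0 w \<partial>distr N borel (Y 0))"
proof -
  let ?V = "\<lambda>j. if j = 0 then Y 0 else W j"
  let ?A = "\<lambda>\<omega>. \<lambda>j\<in>{0}. ?V j \<omega>" and ?B = "\<lambda>\<omega>. \<lambda>j\<in>{1..h}. ?V j \<omega>"
  let ?P = "PiM {0::nat} (\<lambda>_. borel) \<Otimes>\<^sub>M PiM {1..h} (\<lambda>_. borel)"
  define F where "F p = g (trunc_vec h (limit_path \<phi> (fst p 0) (snd p)))" for p :: "(nat \<Rightarrow> real) \<times> (nat \<Rightarrow> real)"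
  have ind: "PN.indep_var (PiM {0} (\<lambda>_. borel)) ?A (PiM {1..h} (\<lambda>_. borel)) ?B"
    by (rule PN.indep_var_restrict[OF Y_indep]) auto
  have [measurable]: "(\<lambda>p. fst p 0) \<in> borel_measurable ?P"
    by (rule measurable_compose[OF measurable_fst measurable_component_singleton]) simp
  have F_meas: "F \<in> borel_measurable ?P"
    unfolding F_def
    by (intro measurable_g measurable_limit_path)
       (auto intro!: measurable_compose[OF measurable_snd measurable_component_singleton])
  have restrict_W: "trunc_vec h (limit_path \<phi> z (?B \<omega>)) = trunc_vec h (limit_path \<phi> z (\<lambda>j. W j \<omega>))" for z \<omega>
    by (rule trunc_limit_path_cong) auto
  have path_meas: "(\<lambda>\<omega>. g (trunc_vec h (limit_path \<phi> (Y 0 \<omega>) (\<lambda>j. W j \<omega>)))) \<in> borel_measurable N"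
    by (intro measurable_g measurable_limit_path) auto
  have "(LINT \<omega>|N. g (trunc_vec h (\<lambda>j. Y j \<omega>))) = (LINT \<omega>|N. g (trunc_vec h (limit_path \<phi> (Y 0 \<omega>) (\<lambda>j. W j \<omega>))))"
  proof (rule integral_cong_AE)
    show "(\<lambda>\<omega>. g (trunc_vec h (\<lambda>j. Y j \<omega>))) \<in> borel_measurable N"
      by (intro measurable_g measurable_trunc_vec measurable_Y)
    show "AE \<omega> in N. g (trunc_vec h (\<lambda>j. Y j \<omega>)) = g (trunc_vec h (limit_path \<phi> (Y 0 \<omega>) (\<lambda>j. W j \<omega>)))"
      using AE_limit_chain by eventually_elim simp
  qed (rule path_meas)
  also have "\<dots> = (\<integral>\<omega>. F (?A \<omega>, ?B \<omega>) \<partial>N)"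
    unfolding F_def fst_conv snd_conv restrict_W by simp
  also have "\<dots> = (\<integral>\<omega>. (\<integral>\<omega>'. F (?A \<omega>, ?B \<omega>') \<partial>N) \<partial>N)"
    by (rule integral_indep_var_iterated[where C=C, OF N ind F_meas]) (simp add: F_def g_bound)
  also have "\<dots> = (\<integral>\<omega>. path_kernel g 0 (Y 0 \<omega>) \<partial>N)"
    unfolding F_def fst_conv snd_conv restrict_W path_kernel_at_zero by simp
  also have "\<dots> = (\<integral>w. path_kernel g 0 w \<partial>distr N borel (Y 0))"
    by (rule integral_distr[symmetric]) (auto intro: measurable_path_kernel)
  finally show ?thesis .
qed

text \<open>The conditional expectations converge along every sequence of levels tending to
  infinity: the scale \<open>1 / s n\<close> tends to \<open>0\<close>, the conditional law of \<open>X 0 / s n\<close> converges to the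
  Pareto law of \<open>Y 0\<close>, and the path kernel is bounded and jointly continuous.\<close>

lemma conditional_integral_tendsto:
  assumes s: "filterlim s at_top sequentially" and s_pos: "\<And>n. s n > 0"
    and tail_pos: "\<And>n. measure M (exceed (s n)) > 0"
  shows "(\<lambda>n. LINT \<omega>|uniform_measure M (exceed (s n)). g (trunc_vec h (\<lambda>j. X j \<omega> / s n powr (\<phi> ^ j))))
      \<longlonglongrightarrow> (LINT \<omega>|N. g (trunc_vec h (\<lambda>j. Y j \<omega>)))"
proof -
  let ?\<mu> = "\<lambda>n. distr (uniform_measure M (exceed (s n))) borel (\<lambda>\<omega>. X 0 \<omega> / s n)"
  have \<mu>: "real_distribution (?\<mu> n)" for n
  proof -
    have "prob_space (uniform_measure M (exceed (s n)))"
      using tail_pos[of n] by (intro prob_space_uniform_measure) (auto simp: PM.emeasure_eq_measure)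
    then show ?thesis
      by (auto simp: real_distribution_def real_distribution_axioms_def intro: prob_space.prob_space_distr)
  qed
  have P: "real_distribution (distr N borel (Y 0))"
    by (auto simp: real_distribution_def real_distribution_axioms_def intro: PN.prob_space_distr)
  have "weak_conv_m ?\<mu> (distr N borel (Y 0))"
    using regularly_varying_tail_weak_conv[OF M measurable_X0 X0_tail
        cdf_pareto[OF N measurable_Y0 Y0_tail] s s_pos] tail_pos
    by (simp add: exceed_def)
  moreover have "(\<lambda>n. 1 / s n) \<longlonglongrightarrow> 0"
    using tendsto_inverse_0_at_top[OF s] by (simp add: inverse_eq_divide)
  ultimately have "(\<lambda>n. \<integral>w. path_kernel g (1 / s n) w \<partial>?\<mu> n) \<longlonglongrightarrow> (\<integral>w. path_kernel g 0 w \<partial>distr N borel (Y 0))"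
    by (intro weak_conv_parametric_integral[OF \<mu> P _ path_kernel_continuous path_kernel_bound])
  then show ?thesis
    by (simp add: conditional_integral_eq[OF s_pos tail_pos] limit_integral_eq)
qed

end

text \<open>The theorem inside the model: the levels \<open>x\<close> eventually make the conditioning event
  nonnull, and along every sequence of such levels the conditional expectations converge.\<close>

theorem conditional_convergence:
  "\<forall>g :: (nat \<Rightarrow> real) \<Rightarrow> real. continuous_on UNIV g \<and> bounded (range g) \<longrightarrow>
      ((\<lambda>x. LINT \<omega>|uniform_measure M {\<omega> \<in> space M. x < X 0 \<omega>}.
              g (\<lambda>j. if j \<le> h then X j \<omega> / x powr (\<phi> ^ j) else 0))
        \<longlongrightarrow> (LINT \<omega>|N. g (\<lambda>j. if j \<le> h then Y j \<omega> else 0))) at_top"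
  unfolding trunc_vec_def[symmetric] exceed_def[symmetric]
proof (intro allI impI)
  fix g :: "(nat \<Rightarrow> real) \<Rightarrow> real"
  assume "continuous_on UNIV g \<and> bounded (range g)"
  then obtain C where g: "continuous_on UNIV g" and C: "\<And>v. \<bar>g v\<bar> \<le> C"
    unfolding bounded_iff by auto
  have "eventually (\<lambda>x. x > 0 \<and> measure M (exceed x) > 0) at_top"
    using X0_tail eventually_gt_at_top[of 0]
    unfolding regularly_varying_def exceed_def by (auto intro: eventually_conj)
  then obtain x0 where x0: "\<And>x. x \<ge> x0 \<Longrightarrow> x > 0 \<and> measure M (exceed x) > 0"
    unfolding eventually_at_top_linorder by blast
  show "((\<lambda>x. LINT \<omega>|uniform_measure M (exceed x). g (trunc_vec h (\<lambda>j. X j \<omega> / x powr (\<phi> ^ j))))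
      \<longlongrightarrow> (LINT \<omega>|N. g (trunc_vec h (\<lambda>j. Y j \<omega>)))) at_top"
  proof (rule tendsto_at_topI_sequentially_ge[where a=x0])
    fix s :: "nat \<Rightarrow> real" assume "filterlim s at_top sequentially" and "\<And>n. s n \<ge> x0"
    then show "(\<lambda>n. LINT \<omega>|uniform_measure M (exceed (s n)). g (trunc_vec h (\<lambda>j. X j \<omega> / s n powr (\<phi> ^ j))))
        \<longlonglongrightarrow> (LINT \<omega>|N. g (trunc_vec h (\<lambda>j. Y j \<omega>)))"
      using x0 by (intro conditional_integral_tendsto[OF g C]) auto
  qed
qed

end

text \<open>The main theorem: its hypotheses say exactly that the data form an instance of the model.\<close>

theorem mainTheorem11:
  fixes M :: "'a measure" and N :: "'b measure"
    and U R X :: "nat \<Rightarrow> 'a \<Rightarrow> real" and F_R :: "real measure"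
    and Y W :: "nat \<Rightarrow> 'b \<Rightarrow> real"
    and \<phi> \<eta> \<alpha> :: real and h :: nat
  assumes M: "prob_space M"
    and phi: "\<phi> > 0" and eta: "0 \<le> \<eta>" "\<eta> < 1" and alpha: "\<alpha> > 0"
    and indep: "prob_space.indep_vars M (\<lambda>_. borel)
        (\<lambda>i. case i of Inl t \<Rightarrow> U t | Inr (Inl t) \<Rightarrow> R t | Inr (Inr _) \<Rightarrow> X 0)
        ({Inl t | t. t \<ge> 1} \<union> {Inr (Inl t) | t. t \<ge> 1} \<union> {Inr (Inr ())})"
    and U_unif: "\<And>t. t \<ge> 1 \<Longrightarrow> distr M borel (U t) = uniform_measure lborel {0..1}"
    and R_distr: "\<And>t. t \<ge> 1 \<Longrightarrow> distr M borel (R t) = F_R"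
    and R_nonneg: "\<And>t. t \<ge> 1 \<Longrightarrow> AE \<omega> in M. R t \<omega> \<ge> 0"
    and X0_nonneg: "AE \<omega> in M. X 0 \<omega> \<ge> 0"
    and X0_tail: "regularly_varying (- \<alpha>) (\<lambda>x. measure M {\<omega> \<in> space M. x < X 0 \<omega>})"
    and X_rec: "\<And>t \<omega>. X (Suc t) \<omega> =
        R (Suc t) \<omega> * (if \<eta> \<le> U (Suc t) \<omega> then X t \<omega> powr \<phi> else 1)"
    and h: "h \<ge> 1"
    and N: "prob_space N"
    and Y_indep: "prob_space.indep_vars N (\<lambda>_. borel)
        (\<lambda>j. if j = 0 then Y 0 else W j) {0..h}"
    and Y0_tail: "\<And>y. y \<ge> 1 \<Longrightarrow> measure N {\<omega> \<in> space N. y < Y 0 \<omega>} = y powr (- \<alpha>)"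
    and W_distr: "\<And>j A. j \<in> {1..h} \<Longrightarrow> A \<in> sets borel \<Longrightarrow>
        measure N (W j -` A \<inter> space N) = (1 - \<eta>) * measure F_R A + \<eta> * indicator A 0"
    and Y_rec: "\<And>j \<omega>. Y (Suc j) \<omega> = Y j \<omega> powr \<phi> * W (Suc j) \<omega>"
  shows "\<forall>g :: (nat \<Rightarrow> real) \<Rightarrow> real. continuous_on UNIV g \<and> bounded (range g) \<longrightarrow>
      ((\<lambda>x. LINT \<omega>|uniform_measure M {\<omega> \<in> space M. x < X 0 \<omega>}.
              g (\<lambda>j. if j \<le> h then X j \<omega> / x powr (\<phi> ^ j) else 0))
        \<longlongrightarrow> (LINT \<omega>|N. g (\<lambda>j. if j \<le> h then Y j \<omega> else 0))) at_top"
proof -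
  interpret power_chain M N U R X F_R Y W \<phi> \<eta> \<alpha> h
    by (rule power_chain.intro[OF M phi eta indep U_unif R_distr R_nonneg X0_nonneg X0_tail
          X_rec h N Y_indep Y0_tail W_distr Y_rec])
  show ?thesis by (rule conditional_convergence)
qed

end
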